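(* Let $F$ be a minimally unsatisfiable clause-set. Then every maximal singular tuple $(v_1,\dots,v_m)$ for $F$ has length $m = \mathrm{singind}(F)$; that is, all maximal singular tuples for $F$ have the same length.
   Context: Literals are variables $v$ and complements $\overline{v}$; a clause is a finite set of literals with no complementary pair; a clause-set is a finite set of clauses; $\mathrm{var}(F)$ is the set of variables occurring in $F$; $\mathrm{ldeg}_F(x)$ is the number of clauses of $F$ containing literal $x$. DP-reduction: $\mathrm{DP}_v(F) := \{C \in F : v \notin \mathrm{var}(C)\} \cup \{(C \cup D)\setminus\{v,\overline{v}\} : C, D \in F,\ C \cap \overline{D} = \{v\}\}$, and $\mathrm{DP}_{v_1,\dots,v_n}(F)$ denotes applying $\mathrm{DP}_{v_1}$, then $\mathrm{DP}_{v_2}$, ..., then $\mathrm{DP}_{v_n}$ (for $n=0$ it is $F$). $\mathrm{MU}$ is the set of minimally unsatisfiable clause-sets. A variable $v$ is singular for $F$ if $\min(\mathrm{ldeg}_F(v),\mathrm{ldeg}_F(\overline{v}))=1$; $F$ is nonsingular if it has no singular variables. For $F\in\mathrm{MU}$, a tuple $(v_1,\dots,v_n)$ of variables ($n\ge 0$) is a singular tuple for $F$ if for every $i$, $v_i$ is singular for $\mathrm{DP}_{v_1,\dots,v_{i-1}}(F)$; it is maximal if $\mathrm{DP}_{v_1,\dots,v_n}(F)$ is nonsingular. The singularity index $\mathrm{singind}(F)$ is the minimal $n$ such that a maximal singular tuple of length $n$ exists for $F$. *)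

theory Defs
  imports Main
begin

datatype 'v lit = Pos 'v | Neg 'v

fun comp :: "'v lit \<Rightarrow> 'v lit" where
  "comp (Pos v) = Neg v"
| "comp (Neg v) = Pos v"

fun var_of :: "'v lit \<Rightarrow> 'v" where
  "var_of (Pos v) = v"
| "var_of (Neg v) = v"

type_synonym 'v clause = "'v lit set"
type_synonym 'v cls = "'v clause set"

definition comp_set :: "'v clause \<Rightarrow> 'v clause" where
  "comp_set C = comp ` C"

definition is_clause :: "'v clause \<Rightarrow> bool" where
  "is_clause C \<longleftrightarrow> finite C \<and> C \<inter> comp_set C = {}"

definition is_clause_set :: "'v cls \<Rightarrow> bool" where
  "is_clause_set F \<longleftrightarrow> finite F \<and> (\<forall>C\<in>F. is_clause C)"

definition vars :: "'v cls \<Rightarrow> 'v set" where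
  "vars F = (\<Union>C\<in>F. var_of ` C)"

definition ldeg :: "'v cls \<Rightarrow> 'v lit \<Rightarrow> nat" where
  "ldeg F x = card {C \<in> F. x \<in> C}"

fun lit_val :: "('v \<Rightarrow> bool) \<Rightarrow> 'v lit \<Rightarrow> bool" where
  "lit_val \<phi> (Pos v) = \<phi> v"
| "lit_val \<phi> (Neg v) = (\<not> \<phi> v)"

definition satisfiable :: "'v cls \<Rightarrow> bool" where
  "satisfiable F \<longleftrightarrow> (\<exists>\<phi>. \<forall>C\<in>F. \<exists>x\<in>C. lit_val \<phi> x)"

definition MU :: "'v cls set" where
  "MU = {F. is_clause_set F \<and> \<not> satisfiable F \<and> (\<forall>C\<in>F. satisfiable (F - {C}))}"

definition DP :: "'v \<Rightarrow> 'v cls \<Rightarrow> 'v cls" where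
  "DP v F = {C \<in> F. v \<notin> var_of ` C}
     \<union> {(C \<union> D) - {Pos v, Neg v} | C D. C \<in> F \<and> D \<in> F \<and> C \<inter> comp_set D = {Pos v}}"

definition DPs :: "'v list \<Rightarrow> 'v cls \<Rightarrow> 'v cls" where
  "DPs vs F = foldl (\<lambda>G v. DP v G) F vs"

definition singular :: "'v cls \<Rightarrow> 'v \<Rightarrow> bool" where
  "singular F v \<longleftrightarrow> min (ldeg F (Pos v)) (ldeg F (Neg v)) = 1"

definition nonsingular :: "'v cls \<Rightarrow> bool" where
  "nonsingular F \<longleftrightarrow> (\<forall>v. \<not> singular F v)"

definition singular_tuple :: "'v cls \<Rightarrow> 'v list \<Rightarrow> bool" where
  "singular_tuple F vs \<longleftrightarrow> (\<forall>i < length vs. singular (DPs (take i vs) F) (vs ! i))"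

definition maximal_singular_tuple :: "'v cls \<Rightarrow> 'v list \<Rightarrow> bool" where
  "maximal_singular_tuple F vs \<longleftrightarrow> singular_tuple F vs \<and> nonsingular (DPs vs F)"

definition singind :: "'v cls \<Rightarrow> nat" where
  "singind F = (LEAST n. \<exists>vs. maximal_singular_tuple F vs \<and> length vs = n)"

end

theory Submission
  imports Defs
begin

text \<open>
  Maximal singular tuples are the normal forms of the rewriting system \<open>F \<rightarrow> DP\<^sub>v(F)\<close>,
  \<open>v\<close> singular, which terminates since every step removes a clause. So it suffices to show
  that two different first steps \<open>v \<noteq> w\<close> can be joined with equal lengths.
  If a singular literal of \<open>v\<close> and one of \<open>w\<close> sit in different clauses, the reductions
  commute and each variable stays singular after eliminating the other. Otherwise all
  singular literals of \<open>v\<close> and \<open>w\<close> sit in one clause \<open>C\<close>; a singular variable \<open>u\<close> of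
  \<open>DP\<^sub>v(F)\<close> (or of \<open>DP\<^sub>w(F)\<close>) then already has a singular literal outside \<open>C\<close> in \<open>F\<close>,
  and both \<open>v\<close> and \<open>w\<close> commute with \<open>u\<close>, so the two branches are joined through \<open>DP\<^sub>u(F)\<close>.
\<close>

lemma comp_comp [simp]: "comp (comp x) = x"
  by (cases x) auto

lemma comp_neq [simp]: "comp x \<noteq> x" "x \<noteq> comp x"
  by (cases x; simp)+

lemma var_of_comp [simp]: "var_of (comp x) = var_of x"
  by (cases x) auto

lemma lit_val_comp [simp]: "lit_val \<phi> (comp x) = (\<not> lit_val \<phi> x)"
  by (cases x) auto

lemma var_of_eq_iff: "var_of l = var_of x \<longleftrightarrow> l = x \<or> l = comp x"
  by (cases l; cases x) auto

lemma Pos_eq_comp_iff: "Pos v = comp d \<longleftrightarrow> d = Neg v"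
  by (cases d) auto

lemma clash_Pos_mem:
  assumes "C1 \<inter> comp_set D1 = {Pos v}"
  shows "Pos v \<in> C1" "Neg v \<in> D1"
proof -
  have "Pos v \<in> C1 \<inter> comp ` D1"
    using assms by (simp add: comp_set_def)
  then show "Pos v \<in> C1" "Neg v \<in> D1"
    by (auto simp: Pos_eq_comp_iff)
qed

lemma is_clause_iff: "is_clause K \<longleftrightarrow> finite K \<and> (\<forall>l\<in>K. comp l \<notin> K)"
  unfolding is_clause_def comp_set_def by (rule conj_cong[OF refl]) blast

lemma is_clause_comp_notin: "is_clause C \<Longrightarrow> l \<in> C \<Longrightarrow> comp l \<notin> C"
  by (simp add: is_clause_iff)

definition assign :: "('v \<Rightarrow> bool) \<Rightarrow> 'v lit \<Rightarrow> 'v \<Rightarrow> bool" where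
  "assign \<phi> z = \<phi>(var_of z := (z = Pos (var_of z)))"

lemma lit_val_assign:
  "lit_val (assign \<phi> z) l = (if var_of l = var_of z then l = z else lit_val \<phi> l)"
  by (cases l; cases z) (auto simp: assign_def)

lemma MU_finite: "G \<in> MU \<Longrightarrow> finite G"
  by (simp add: MU_def is_clause_set_def)

lemma MU_is_clause: "G \<in> MU \<Longrightarrow> K \<in> G \<Longrightarrow> is_clause K"
  by (simp add: MU_def is_clause_set_def)

lemma MU_obtain_model_falsifying:
  assumes "G \<in> MU" "D \<in> G"
  obtains \<phi> where "\<forall>K\<in>G - {D}. \<exists>l\<in>K. lit_val \<phi> l" "\<forall>l\<in>D. \<not> lit_val \<phi> l"
proof -
  from assms obtain \<phi> where \<phi>: "\<forall>K\<in>G - {D}. \<exists>l\<in>K. lit_val \<phi> l"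
    by (auto simp: MU_def satisfiable_def)
  moreover have "\<forall>l\<in>D. \<not> lit_val \<phi> l"
  proof (rule ccontr)
    assume "\<not> ?thesis"
    with \<phi> have "satisfiable G"
      unfolding satisfiable_def by blast
    with assms show False by (simp add: MU_def)
  qed
  ultimately show ?thesis by (rule that)
qed

text \<open>Otherwise making \<open>z\<close> true extends a model of \<open>G - {K0}\<close> to all of \<open>G\<close>.\<close>
lemma MU_comp_occurs:
  assumes "G \<in> MU" "K0 \<in> G" "z \<in> K0"
  shows "\<exists>K\<in>G. comp z \<in> K"
proof (rule ccontr)
  assume pure: "\<not> ?thesis"
  obtain \<phi> where \<phi>: "\<forall>K\<in>G - {K0}. \<exists>l\<in>K. lit_val \<phi> l"
    using MU_obtain_model_falsifying[OF assms(1,2)] by blast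
  have "\<exists>l\<in>K. lit_val (assign \<phi> z) l" if K: "K \<in> G" for K
  proof (cases "z \<in> K")
    case True
    then show ?thesis by (auto simp: lit_val_assign)
  next
    case False
    with K \<phi> assms(3) obtain l where l: "l \<in> K" "lit_val \<phi> l" by blast
    with False pure K have "var_of l \<noteq> var_of z"
      by (auto simp: var_of_eq_iff)
    with l show ?thesis by (auto simp: lit_val_assign)
  qed
  then have "satisfiable G"
    unfolding satisfiable_def by blast
  with assms(1) show False by (simp add: MU_def)
qed

lemma ldeg_pos_iff: "finite G \<Longrightarrow> 1 \<le> ldeg G z \<longleftrightarrow> (\<exists>K\<in>G. z \<in> K)"
  unfolding ldeg_def by (auto simp: Suc_le_eq card_gt_0_iff)

lemma MU_ldeg_comp_pos: "G \<in> MU \<Longrightarrow> 1 \<le> ldeg G z \<Longrightarrow> 1 \<le> ldeg G (comp z)"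
  using MU_comp_occurs ldeg_pos_iff MU_finite by metis

subsection \<open>DP-reduction on a literal with a unique occurrence\<close>

lemma DP_E:
  assumes "K \<in> DP v G"
  obtains "K \<in> G" "v \<notin> var_of ` K"
  | C1 D1 where "K = (C1 \<union> D1) - {Pos v, Neg v}" "C1 \<in> G" "D1 \<in> G" "C1 \<inter> comp_set D1 = {Pos v}"
  using assms unfolding DP_def by blast

text \<open>If \<open>x\<close> occurs only in \<open>C\<close>, then \<open>DP\<^bsub>var_of x\<^esub>\<close> deletes \<open>C\<close> and replaces every clause
  containing \<open>comp x\<close> by its resolvent with \<open>C\<close>; all other clauses are kept.\<close>
definition resolve_with :: "'v clause \<Rightarrow> 'v lit \<Rightarrow> 'v clause \<Rightarrow> 'v clause" where
  "resolve_with C x K = (if comp x \<in> K then (C - {x}) \<union> (K - {comp x}) else K)"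

lemma mem_resolve_with: "l \<in> resolve_with C x K \<Longrightarrow> l \<in> C - {x} \<or> (l \<in> K \<and> l \<noteq> comp x)"
  by (auto simp: resolve_with_def split: if_splits)

locale unique_occurrence =
  fixes G :: "'v cls" and C :: "'v clause" and x :: "'v lit"
  assumes MU: "G \<in> MU" and C_in: "C \<in> G" and x_in_C: "x \<in> C"
    and unique: "\<And>K. K \<in> G \<Longrightarrow> x \<in> K \<Longrightarrow> K = C"
begin

lemma finite_G: "finite G"
  using MU by (rule MU_finite)

lemma clause: "K \<in> G \<Longrightarrow> is_clause K"
  using MU by (rule MU_is_clause)

lemma comp_notin_C: "comp x \<notin> C"
  using is_clause_comp_notin clause C_in x_in_C by blast

lemma var_of_rest: "a \<in> C - {x} \<Longrightarrow> var_of a \<noteq> var_of x"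
  using comp_notin_C by (auto simp: var_of_eq_iff)

lemma ldeg_eq_1: "ldeg G x = 1"
proof -
  have "{K \<in> G. x \<in> K} = {C}"
    using unique C_in x_in_C by blast
  then show ?thesis by (simp add: ldeg_def)
qed

lemma singular: "singular G (var_of x)"
proof -
  have "1 \<le> ldeg G (comp x)"
    using MU_ldeg_comp_pos[OF MU] ldeg_eq_1 by simp
  then show ?thesis
    using ldeg_eq_1 by (cases x) (auto simp: singular_def min_def)
qed

text \<open>Flipping \<open>x\<close> to false in such a model would satisfy \<open>G\<close>.\<close>
lemma rest_false:
  assumes \<phi>: "\<forall>K\<in>G. comp x \<notin> K \<longrightarrow> (\<exists>l\<in>K. lit_val \<phi> l)" and a: "a \<in> C - {x}"
  shows "\<not> lit_val \<phi> a"
proof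
  assume "lit_val \<phi> a"
  have "\<exists>l\<in>K. lit_val (assign \<phi> (comp x)) l" if K: "K \<in> G" for K
  proof (cases "comp x \<in> K")
    case True
    then show ?thesis
      by (intro bexI[of _ "comp x"]) (simp_all add: lit_val_assign)
  next
    case False
    with \<phi> K obtain l where l: "l \<in> K" "lit_val \<phi> l" by blast
    show ?thesis
    proof (cases "var_of l = var_of x")
      case True
      with False l have "l = x"
        by (auto simp: var_of_eq_iff)
      with l K have "a \<in> K"
        using unique a by blast
      with \<open>lit_val \<phi> a\<close> var_of_rest[OF a] show ?thesis
        by (intro bexI[of _ a]) (simp_all add: lit_val_assign)
    next
      case False
      with l show ?thesis
        by (intro bexI[of _ l]) (simp_all add: lit_val_assign)
    qed
  qed
  then have "satisfiable G"
    unfolding satisfiable_def by blast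
  with MU show False by (simp add: MU_def)
qed

lemma rest_no_clash:
  assumes "D \<in> G" "comp x \<in> D" "a \<in> C - {x}"
  shows "comp a \<notin> D"
proof
  assume "comp a \<in> D"
  obtain \<phi> where \<phi>: "\<forall>K\<in>G - {D}. \<exists>l\<in>K. lit_val \<phi> l" "\<forall>l\<in>D. \<not> lit_val \<phi> l"
    using MU_obtain_model_falsifying[OF MU assms(1)] by blast
  have "\<forall>K\<in>G. comp x \<notin> K \<longrightarrow> (\<exists>l\<in>K. lit_val \<phi> l)"
    using \<phi>(1) assms(2) by blast
  moreover have "lit_val \<phi> a"
    using \<phi>(2) \<open>comp a \<in> D\<close> by (metis lit_val_comp)
  ultimately show False
    using rest_false assms(3) by blast
qed

lemma clash_C_left: assumes "K \<in> G" "comp x \<in> K" shows "C \<inter> comp_set K = {x}"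
proof -
  have "x \<in> comp_set K"
    using assms(2) unfolding comp_set_def by (metis comp_comp imageI)
  moreover have "a = x" if a: "a \<in> C" "a \<in> comp_set K" for a
  proof -
    from a(2) have "comp a \<in> K"
      unfolding comp_set_def by auto
    with a(1) show ?thesis
      using rest_no_clash[OF assms, of a] by blast
  qed
  ultimately show ?thesis
    using x_in_C by blast
qed

lemma clash_C_right: assumes "K \<in> G" "comp x \<in> K" shows "K \<inter> comp_set C = {comp x}"
proof -
  have "b = comp x" if b: "b \<in> K" "b \<in> comp_set C" for b
  proof -
    obtain a where a: "a \<in> C" "b = comp a"
      using b(2) unfolding comp_set_def by auto
    with b(1) have "a \<in> C \<inter> comp_set K"
      unfolding comp_set_def by force
    with a show ?thesis
      using clash_C_left[OF assms] by auto
  qed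
  with assms(2) x_in_C show ?thesis
    unfolding comp_set_def by blast
qed

lemma inj_on_resolve: "inj_on (resolve_with C x) (G - {C})"
proof -
  have no_merge: False if K1: "K1 \<in> G" "comp x \<in> K1" and K2: "K2 \<in> G" "K2 \<noteq> K1"
    and eq: "resolve_with C x K1 = resolve_with C x K2" for K1 K2
  proof -
    obtain \<phi> where \<phi>: "\<forall>K\<in>G - {K1}. \<exists>l\<in>K. lit_val \<phi> l" "\<forall>l\<in>K1. \<not> lit_val \<phi> l"
      using MU_obtain_model_falsifying[OF MU K1(1)] by blast
    obtain l where l: "l \<in> K2" "lit_val \<phi> l"
      using \<phi>(1) K2 by blast
    with \<phi>(2) K1(2) have "l \<in> resolve_with C x K2"
      by (auto simp: resolve_with_def)
    with eq K1(2) \<phi>(2) l(2) have "l \<in> C - {x}"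
      by (auto simp: resolve_with_def)
    moreover have "\<forall>K\<in>G. comp x \<notin> K \<longrightarrow> (\<exists>l\<in>K. lit_val \<phi> l)"
      using \<phi>(1) K1(2) by blast
    ultimately show False
      using rest_false l(2) by blast
  qed
  show ?thesis
  proof (rule inj_onI, rule ccontr)
    fix K1 K2
    assume K: "K1 \<in> G - {C}" "K2 \<in> G - {C}" "resolve_with C x K1 = resolve_with C x K2" "K1 \<noteq> K2"
    show False
    proof (cases "comp x \<in> K1 \<or> comp x \<in> K2")
      case True
      with K no_merge show False by blast
    next
      case False
      with K show False by (simp add: resolve_with_def)
    qed
  qed
qed

lemma Pos_Neg_var_of: "{Pos (var_of x), Neg (var_of x)} = {x, comp x}"
  by (cases x) auto

lemma resolve_with_eq:
  assumes "D \<in> G" "comp x \<in> D"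
  shows "resolve_with C x D = (C \<union> D) - {x, comp x}"
proof -
  have "x \<notin> D"
    using is_clause_comp_notin[OF clause[OF assms(1)] assms(2)] by simp
  with assms(2) comp_notin_C show ?thesis
    by (auto simp: resolve_with_def)
qed

lemma DP_subset_image: "DP (var_of x) G \<subseteq> resolve_with C x ` (G - {C})"
proof
  fix K
  assume "K \<in> DP (var_of x) G"
  then show "K \<in> resolve_with C x ` (G - {C})"
  proof (cases rule: DP_E)
    case 1
    then have "x \<notin> K" "comp x \<notin> K"
      by (metis image_eqI var_of_comp)+
    with 1 x_in_C show ?thesis
      by (intro rev_image_eqI[of K]) (auto simp: resolve_with_def)
  next
    case (2 C1 D1)
    let ?v = "var_of x"
    note Pos = clash_Pos_mem(1)[OF 2(4)] and Neg = clash_Pos_mem(2)[OF 2(4)]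
    have K: "K = (C1 \<union> D1) - {x, comp x}"
      using 2(1) by (simp add: Pos_Neg_var_of)
    consider (pos) "x = Pos ?v" | (neg) "x = Neg ?v"
      by (cases x) auto
    then show ?thesis
    proof cases
      case pos
      have "C1 = C"
        using unique[OF \<open>C1 \<in> G\<close>] Pos pos by simp
      moreover have "comp x \<in> D1"
        using Neg pos by (metis comp.simps(1))
      ultimately show ?thesis
        using K \<open>D1 \<in> G\<close> comp_notin_C
        by (intro rev_image_eqI[of D1]) (auto simp: resolve_with_eq)
    next
      case neg
      have "D1 = C"
        using unique[OF \<open>D1 \<in> G\<close>] Neg neg by simp
      moreover have "comp x \<in> C1"
        using Pos neg by (metis comp.simps(2))
      ultimately show ?thesis
        using K \<open>C1 \<in> G\<close> comp_notin_C
        by (intro rev_image_eqI[of C1]) (auto simp: resolve_with_eq)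
    qed
  qed
qed

lemma image_subset_DP: "resolve_with C x ` (G - {C}) \<subseteq> DP (var_of x) G"
proof
  fix K
  assume "K \<in> resolve_with C x ` (G - {C})"
  then obtain D where D: "D \<in> G" "D \<noteq> C" "K = resolve_with C x D"
    by blast
  show "K \<in> DP (var_of x) G"
  proof (cases "comp x \<in> D")
    case False
    with D unique have "var_of x \<notin> var_of ` D"
      by (auto simp: var_of_eq_iff)
    with D False show ?thesis
      unfolding DP_def by (simp add: resolve_with_def)
  next
    case True
    then have K: "K = (C \<union> D) - {Pos (var_of x), Neg (var_of x)}"
      using D resolve_with_eq by (simp add: Pos_Neg_var_of)
    consider "x = Pos (var_of x)" | "x = Neg (var_of x)"
      by (cases x) auto
    then show ?thesis
    proof cases
      case 1
      then have "C \<inter> comp_set D = {Pos (var_of x)}"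
        using clash_C_left[OF D(1) True] by simp
      with C_in D(1) K show ?thesis
        unfolding DP_def by blast
    next
      case 2
      then have "D \<inter> comp_set C = {Pos (var_of x)}"
        using clash_C_right[OF D(1) True] by (metis comp.simps(2))
      moreover have "K = (D \<union> C) - {Pos (var_of x), Neg (var_of x)}"
        using K by blast
      ultimately show ?thesis
        using C_in D(1) unfolding DP_def by blast
    qed
  qed
qed

lemma DP_eq_image: "DP (var_of x) G = resolve_with C x ` (G - {C})"
  using DP_subset_image image_subset_DP by (rule subset_antisym)

lemma is_clause_resolve: assumes "K \<in> G" shows "is_clause (resolve_with C x K)"
proof (cases "comp x \<in> K")
  case False
  then show ?thesis
    using clause[OF assms] by (simp add: resolve_with_def)
next
  case True
  have "comp l \<notin> (C - {x}) \<union> (K - {comp x})" if "l \<in> (C - {x}) \<union> (K - {comp x})" for l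
    using that is_clause_comp_notin[OF clause[OF C_in]] is_clause_comp_notin[OF clause[OF assms]]
      rest_no_clash[OF assms True] rest_no_clash[OF assms True, of "comp l"]
    by auto
  moreover have "finite C" "finite K"
    using clause[OF C_in] clause[OF assms] by (auto simp: is_clause_iff)
  ultimately show ?thesis
    using True by (simp add: is_clause_iff resolve_with_def)
qed

lemma resolve_satisfied:
  assumes "\<exists>l\<in>K. lit_val \<phi> l" "\<exists>l\<in>C. lit_val \<phi> l"
  shows "\<exists>l\<in>resolve_with C x K. lit_val \<phi> l"
proof (cases "comp x \<in> K \<and> \<not> (\<exists>a\<in>C - {x}. lit_val \<phi> a)")
  case True
  then have "lit_val \<phi> x"
    using assms(2) by blast
  with assms(1) True show ?thesis
    by (auto simp: resolve_with_def)
next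
  case False
  with assms(1) show ?thesis
    by (auto simp: resolve_with_def)
qed

text \<open>A model of the resolvents either satisfies \<open>C - {x}\<close>, contradicting \<open>rest_false\<close>,
  or it satisfies every clause of \<open>G\<close> once \<open>x\<close> is set true.\<close>
lemma DP_unsatisfiable: "\<not> satisfiable (DP (var_of x) G)"
proof
  assume "satisfiable (DP (var_of x) G)"
  then obtain \<psi> where \<psi>: "\<forall>K\<in>G - {C}. \<exists>l\<in>resolve_with C x K. lit_val \<psi> l"
    unfolding DP_eq_image satisfiable_def by auto
  show False
  proof (cases "\<exists>a\<in>C - {x}. lit_val \<psi> a")
    case True
    have "\<exists>l\<in>K. lit_val \<psi> l" if K: "K \<in> G" "comp x \<notin> K" for K
    proof (cases "K = C")
      case True
      with \<open>\<exists>a\<in>C - {x}. lit_val \<psi> a\<close> show ?thesis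
        by blast
    next
      case False
      with K \<psi> have "\<exists>l\<in>resolve_with C x K. lit_val \<psi> l"
        by blast
      with K(2) show ?thesis
        by (simp add: resolve_with_def)
    qed
    with True show False
      using rest_false by blast
  next
    case False
    have "\<exists>l\<in>K. lit_val (assign \<psi> x) l" if K: "K \<in> G" for K
    proof (cases "K = C")
      case True
      then show ?thesis
        using x_in_C by (intro bexI[of _ x]) (simp_all add: lit_val_assign)
    next
      case False
      with K \<psi> obtain l where l: "l \<in> resolve_with C x K" "lit_val \<psi> l"
        by blast
      with mem_resolve_with[OF l(1)] have "l \<in> K" "l \<noteq> comp x"
        using \<open>\<not> (\<exists>a\<in>C - {x}. lit_val \<psi> a)\<close> by auto
      moreover have "x \<notin> K"
        using unique K False by blast
      ultimately have "var_of l \<noteq> var_of x"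
        by (auto simp: var_of_eq_iff)
      with l \<open>l \<in> K\<close> show ?thesis
        by (intro bexI[of _ l]) (simp_all add: lit_val_assign)
    qed
    then have "satisfiable G"
      unfolding satisfiable_def by blast
    with MU show False
      by (simp add: MU_def)
  qed
qed

lemma DP_minimal:
  assumes "K1 \<in> DP (var_of x) G"
  shows "satisfiable (DP (var_of x) G - {K1})"
proof -
  obtain K0 where K0: "K0 \<in> G" "K0 \<noteq> C" "K1 = resolve_with C x K0"
    using assms DP_eq_image by blast
  obtain \<phi> where \<phi>: "\<forall>K\<in>G - {K0}. \<exists>l\<in>K. lit_val \<phi> l"
    using MU_obtain_model_falsifying[OF MU K0(1)] by blast
  have "\<exists>l\<in>K'. lit_val \<phi> l" if K': "K' \<in> DP (var_of x) G - {K1}" for K'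
  proof -
    obtain K where K: "K \<in> G" "K' = resolve_with C x K"
      using K' DP_eq_image by blast
    with K' K0(3) have "K \<noteq> K0"
      by blast
    with \<phi> K(1) C_in K0(2) have "\<exists>l\<in>K. lit_val \<phi> l" "\<exists>l\<in>C. lit_val \<phi> l"
      by blast+
    with K(2) show ?thesis
      by (simp add: resolve_satisfied)
  qed
  then show ?thesis
    unfolding satisfiable_def by blast
qed

lemma MU_DP: "DP (var_of x) G \<in> MU"
proof -
  have "is_clause_set (DP (var_of x) G)"
    unfolding is_clause_set_def DP_eq_image using finite_G is_clause_resolve by blast
  then show ?thesis
    using DP_unsatisfiable DP_minimal unfolding MU_def by blast
qed

lemma card_DP: "card (DP (var_of x) G) = card G - 1"
proof -
  have "card (DP (var_of x) G) = card (G - {C})"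
    unfolding DP_eq_image by (rule card_image[OF inj_on_resolve])
  with C_in finite_G show ?thesis
    by simp
qed

lemma var_notin_vars_DP: "var_of x \<notin> vars (DP (var_of x) G)"
proof
  assume "var_of x \<in> vars (DP (var_of x) G)"
  then obtain K' l where "K' \<in> DP (var_of x) G" "l \<in> K'" "var_of l = var_of x"
    unfolding vars_def by auto
  then obtain K where K: "K \<in> G" "K \<noteq> C" "l \<in> resolve_with C x K" "var_of l = var_of x"
    unfolding DP_eq_image by blast
  have "x \<notin> K"
    using unique K by blast
  from K(4) consider "l = x" | "l = comp x"
    by (auto simp: var_of_eq_iff)
  then show False
    using mem_resolve_with[OF K(3)] \<open>x \<notin> K\<close> comp_notin_C by cases simp_all
qed

lemma ldeg_DP: "ldeg (DP (var_of x) G) z = card {K \<in> G - {C}. z \<in> resolve_with C x K}"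
proof -
  have "{K' \<in> DP (var_of x) G. z \<in> K'} = resolve_with C x ` {K \<in> G - {C}. z \<in> resolve_with C x K}"
    unfolding DP_eq_image by auto
  moreover have "inj_on (resolve_with C x) {K \<in> G - {C}. z \<in> resolve_with C x K}"
    by (rule inj_on_subset[OF inj_on_resolve]) auto
  ultimately show ?thesis
    unfolding ldeg_def by (simp add: card_image)
qed

lemma ldeg_DP_eq: assumes "z \<notin> C" "z \<noteq> comp x" shows "ldeg (DP (var_of x) G) z = ldeg G z"
proof -
  have "{K \<in> G - {C}. z \<in> resolve_with C x K} = {K \<in> G. z \<in> K}"
    using assms C_in by (auto simp: resolve_with_def split: if_splits)
  then show ?thesis
    unfolding ldeg_DP by (simp add: ldeg_def)
qed

text \<open>Every clause containing \<open>comp x\<close> passes the literals of \<open>C - {x}\<close> on to its resolvent.\<close>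
lemma ldeg_comp_le_ldeg_DP: assumes "z \<in> C - {x}" shows "ldeg G (comp x) \<le> ldeg (DP (var_of x) G) z"
proof -
  have "{K \<in> G. comp x \<in> K} \<subseteq> {K \<in> G - {C}. z \<in> resolve_with C x K}"
    using assms comp_notin_C by (auto simp: resolve_with_def)
  then show ?thesis
    unfolding ldeg_DP using finite_G by (simp add: ldeg_def card_mono)
qed

lemma unique_occurrence_DP:
  assumes y: "unique_occurrence G D y" and "D \<noteq> C" "var_of y \<noteq> var_of x"
  shows "unique_occurrence (DP (var_of x) G) (resolve_with C x D) y"
proof -
  interpret y: unique_occurrence G D y by (rule y)
  have y_notin: "y \<notin> C - {x}" "y \<noteq> comp x"
    using assms(2,3) y.unique[OF C_in] by auto
  show ?thesis
  proof
    show "DP (var_of x) G \<in> MU" by (rule MU_DP)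
    show "resolve_with C x D \<in> DP (var_of x) G"
      using y.C_in assms(2) DP_eq_image by auto
    show "y \<in> resolve_with C x D"
      using y.x_in_C y_notin by (auto simp: resolve_with_def)
    fix K'
    assume "K' \<in> DP (var_of x) G" "y \<in> K'"
    then obtain K where "K \<in> G" "K' = resolve_with C x K" "y \<in> K"
      using y_notin mem_resolve_with unfolding DP_eq_image by blast
    then show "K' = resolve_with C x D"
      using y.unique by blast
  qed
qed

end

lemma unique_occurrence_of_ldeg:
  assumes "G \<in> MU" "ldeg G z = 1"
  obtains C where "unique_occurrence G C z"
proof -
  obtain C where "{K \<in> G. z \<in> K} = {C}"
    using assms(2) unfolding ldeg_def by (auto simp: card_1_singleton_iff)
  with assms(1) have "unique_occurrence G C z"
    by unfold_locales blast+
  then show ?thesis by (rule that)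
qed

lemma (in unique_occurrence) two_le_ldeg_comp:
  assumes "\<And>E. \<not> unique_occurrence G E (comp x)"
  shows "2 \<le> ldeg G (comp x)"
proof -
  have "1 \<le> ldeg G (comp x)"
    using MU_ldeg_comp_pos[OF MU] ldeg_eq_1 by simp
  moreover have "ldeg G (comp x) \<noteq> 1"
    using unique_occurrence_of_ldeg[OF MU] assms by metis
  ultimately show ?thesis
    by simp
qed

lemma singular_obtain_unique_occurrence:
  assumes "G \<in> MU" "singular G v"
  obtains z C where "var_of z = v" "unique_occurrence G C z"
proof -
  have "ldeg G (Pos v) = 1 \<or> ldeg G (Neg v) = 1"
    using assms(2) unfolding singular_def by (auto simp: min_def split: if_splits)
  then show ?thesis
    using unique_occurrence_of_ldeg[OF assms(1)] that by (metis var_of.simps)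
qed

lemma MU_DP_singular:
  assumes "G \<in> MU" "singular G v"
  shows "DP v G \<in> MU" "card (DP v G) < card G"
proof -
  obtain z C where z: "var_of z = v" "unique_occurrence G C z"
    using singular_obtain_unique_occurrence[OF assms] .
  interpret unique_occurrence G C z by (rule z(2))
  show "DP v G \<in> MU"
    using MU_DP z(1) by simp
  have "card G > 0"
    using C_in finite_G card_gt_0_iff by blast
  then show "card (DP v G) < card G"
    using card_DP z(1) by simp
qed

subsection \<open>Two singular literals in different clauses\<close>

locale two_unique_occurrences = occ_x: unique_occurrence G C x + occ_y: unique_occurrence G D y
  for G C x D y +
  assumes vars_ne: "var_of x \<noteq> var_of y" and clauses_ne: "C \<noteq> D"
begin

lemma y_notin_C: "y \<notin> C"
  using occ_y.unique occ_x.C_in clauses_ne by blast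

lemma unique_occurrence_DP_y: "unique_occurrence (DP (var_of x) G) (resolve_with C x D) y"
  using occ_x.unique_occurrence_DP[OF occ_y.unique_occurrence_axioms] clauses_ne vars_ne by simp

lemma singular_DP: "singular (DP (var_of x) G) (var_of y)"
  using unique_occurrence.singular[OF unique_occurrence_DP_y] .

lemma DP_DP_eq_image:
  "DP (var_of y) (DP (var_of x) G) =
     (\<lambda>K. resolve_with (resolve_with C x D) y (resolve_with C x K)) ` (G - {C, D})"
proof -
  interpret occ_xy: unique_occurrence "DP (var_of x) G" "resolve_with C x D" y
    by (rule unique_occurrence_DP_y)
  have "DP (var_of x) G - {resolve_with C x D} = resolve_with C x ` (G - {C} - {D})"
    unfolding occ_x.DP_eq_image using occ_x.inj_on_resolve occ_y.C_in clauses_ne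
    by (auto simp: inj_on_def)
  then show ?thesis
    unfolding occ_xy.DP_eq_image by (simp add: image_comp Diff_insert2[symmetric] insert_commute)
qed

text \<open>Otherwise \<open>C\<close> and \<open>D\<close> would clash on both \<open>x\<close> and \<open>comp y\<close>, contradicting \<open>clash_C_left\<close>.\<close>
lemma not_mutual_clash: "\<not> (comp x \<in> D \<and> comp y \<in> C)"
proof
  assume clash: "comp x \<in> D \<and> comp y \<in> C"
  then have "C \<inter> comp_set D = {x}"
    using occ_x.clash_C_left occ_y.C_in by blast
  moreover have "comp y \<in> comp_set D"
    using occ_y.x_in_C unfolding comp_set_def by blast
  ultimately have "comp y = x"
    using clash by blast
  with vars_ne show False
    by (metis var_of_comp)
qed

lemma resolve_with_commute:
  assumes "K \<in> G" "K \<noteq> C" "K \<noteq> D"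
  shows "resolve_with (resolve_with C x D) y (resolve_with C x K)
       = resolve_with (resolve_with D y C) x (resolve_with D y K)"
proof -
  have "x \<notin> K" "y \<notin> K"
    using occ_x.unique occ_y.unique assms by blast+
  moreover have "x \<notin> D"
    using occ_x.unique occ_y.C_in clauses_ne by blast
  moreover have "x \<noteq> y" "x \<noteq> comp y" "y \<noteq> comp x" "comp x \<noteq> comp y"
    using vars_ne by (auto dest: arg_cong[of _ _ var_of])
  ultimately show ?thesis
    using occ_x.x_in_C occ_y.x_in_C occ_x.comp_notin_C occ_y.comp_notin_C y_notin_C not_mutual_clash
    unfolding resolve_with_def
    by (cases "comp x \<in> K"; cases "comp y \<in> K"; cases "comp x \<in> D"; cases "comp y \<in> C") auto
qed

end

lemma two_unique_occurrencesI:
  "unique_occurrence G C x \<Longrightarrow> unique_occurrence G D y \<Longrightarrow> var_of x \<noteq> var_of y \<Longrightarrow> C \<noteq> D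
    \<Longrightarrow> two_unique_occurrences G C x D y"
  by (simp add: two_unique_occurrences_def two_unique_occurrences_axioms_def)

lemma two_unique_occurrences_swap: "two_unique_occurrences G C x D y \<Longrightarrow> two_unique_occurrences G D y C x"
  unfolding two_unique_occurrences_def two_unique_occurrences_axioms_def by auto

lemma (in two_unique_occurrences) DP_commute:
  "DP (var_of y) (DP (var_of x) G) = DP (var_of x) (DP (var_of y) G)"
proof -
  interpret swapped: two_unique_occurrences G D y C x
    using two_unique_occurrences_swap two_unique_occurrences_axioms .
  show ?thesis
    unfolding DP_DP_eq_image swapped.DP_DP_eq_image
    using resolve_with_commute by (intro image_cong) auto
qed

lemma singular_tuple_Cons:
  "singular_tuple G (v # t) \<longleftrightarrow> singular G v \<and> singular_tuple (DP v G) t"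
proof -
  have "singular_tuple G (v # t) \<longleftrightarrow>
      singular G v \<and> (\<forall>j < length t. singular (DPs (take (Suc j) (v # t)) G) ((v # t) ! Suc j))"
    unfolding singular_tuple_def by (simp add: All_less_Suc2 DPs_def)
  also have "\<dots> \<longleftrightarrow> singular G v \<and> singular_tuple (DP v G) t"
    by (simp add: singular_tuple_def DPs_def)
  finally show ?thesis .
qed

lemma maximal_singular_tuple_Nil: "maximal_singular_tuple G [] \<longleftrightarrow> nonsingular G"
  by (simp add: maximal_singular_tuple_def singular_tuple_def DPs_def)

lemma maximal_singular_tuple_Cons:
  "maximal_singular_tuple G (v # t) \<longleftrightarrow> singular G v \<and> maximal_singular_tuple (DP v G) t"
  by (auto simp: maximal_singular_tuple_def singular_tuple_Cons DPs_def)

lemma maximal_singular_tuple_exists: "G \<in> MU \<Longrightarrow> \<exists>vs. maximal_singular_tuple G vs"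
proof (induction "card G" arbitrary: G rule: less_induct)
  case less
  show ?case
  proof (cases "nonsingular G")
    case True
    then have "maximal_singular_tuple G []"
      by (simp add: maximal_singular_tuple_Nil)
    then show ?thesis ..
  next
    case False
    then obtain v where v: "singular G v"
      by (auto simp: nonsingular_def)
    obtain t where "maximal_singular_tuple (DP v G) t"
      using less.hyps MU_DP_singular[OF less.prems v] by blast
    with v have "maximal_singular_tuple G (v # t)"
      by (simp add: maximal_singular_tuple_Cons)
    then show ?thesis ..
  qed
qed

lemma common_continuation:
  assumes "two_unique_occurrences G C x D y"
  obtains t where "maximal_singular_tuple (DP (var_of x) G) (var_of y # t)"
    "maximal_singular_tuple (DP (var_of y) G) (var_of x # t)"
proof -
  interpret two_unique_occurrences G C x D y by (rule assms)
  interpret swapped: two_unique_occurrences G D y C x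
    using two_unique_occurrences_swap assms .
  have "DP (var_of y) (DP (var_of x) G) \<in> MU"
    using MU_DP_singular(1)[OF occ_x.MU_DP singular_DP] .
  then obtain t where "maximal_singular_tuple (DP (var_of y) (DP (var_of x) G)) t"
    using maximal_singular_tuple_exists by blast
  then show ?thesis
    using that singular_DP swapped.singular_DP DP_commute
    by (simp add: maximal_singular_tuple_Cons)
qed

subsection \<open>Confluence\<close>

text \<open>The hypothesis of the induction on the number of clauses.\<close>
locale same_length_below =
  fixes G :: "'v cls"
  assumes MU: "G \<in> MU"
    and IH: "\<And>(H :: 'v cls) a b. card H < card G \<Longrightarrow> H \<in> MU \<Longrightarrow>
      maximal_singular_tuple H a \<Longrightarrow> maximal_singular_tuple H b \<Longrightarrow> length a = length b"
begin

lemma same_length_DP: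
  assumes "singular G v" "maximal_singular_tuple (DP v G) a" "maximal_singular_tuple (DP v G) b"
  shows "length a = length b"
  using IH[OF MU_DP_singular(2,1)[OF MU assms(1)] assms(2,3)] .

text \<open>A singular variable \<open>u\<close> of \<open>DP\<^bsub>var_of x\<^esub>(G)\<close> is already singular in \<open>G\<close>, through a
  literal outside \<open>C\<close>: the literals of \<open>C - {x}\<close> inherit the degree of \<open>comp x\<close>, which
  is at least 2, and all other literals keep their degree.\<close>
lemma singular_DP_obtain_occurrence_outside:
  assumes x: "unique_occurrence G C x" and y: "unique_occurrence G C y" "var_of x \<noteq> var_of y"
    and "2 \<le> ldeg G (comp x)" "2 \<le> ldeg G (comp y)"
    and "singular (DP (var_of x) G) u"
  obtains z D where "var_of z = u" "two_unique_occurrences G D z C x" "two_unique_occurrences G D z C y"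
proof -
  interpret occ_x: unique_occurrence G C x by (rule x)
  interpret occ_y: unique_occurrence G C y by (rule y)
  obtain z E where z: "var_of z = u" "unique_occurrence (DP (var_of x) G) E z"
    using singular_obtain_unique_occurrence[OF occ_x.MU_DP assms(6)] .
  have ldeg_z: "ldeg (DP (var_of x) G) z = 1"
    using unique_occurrence.ldeg_eq_1[OF z(2)] .
  have "var_of z \<in> vars (DP (var_of x) G)"
    using unique_occurrence.C_in[OF z(2)] unique_occurrence.x_in_C[OF z(2)]
    unfolding vars_def by blast
  then have zx: "var_of z \<noteq> var_of x"
    using occ_x.var_notin_vars_DP by metis
  then have "z \<noteq> x" "z \<noteq> comp x"
    by auto
  have "z \<notin> C"
  proof
    assume "z \<in> C"
    with \<open>z \<noteq> x\<close> have "ldeg G (comp x) \<le> ldeg (DP (var_of x) G) z"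
      by (intro occ_x.ldeg_comp_le_ldeg_DP) simp
    with ldeg_z assms(4) show False
      by simp
  qed
  then have "ldeg G z = 1"
    using occ_x.ldeg_DP_eq \<open>z \<noteq> comp x\<close> ldeg_z by simp
  then obtain D where D: "unique_occurrence G D z"
    using unique_occurrence_of_ldeg[OF MU] by blast
  have "D \<noteq> C"
    using \<open>z \<notin> C\<close> unique_occurrence.x_in_C[OF D] by blast
  have "z \<noteq> y"
    using \<open>z \<notin> C\<close> occ_y.x_in_C by blast
  moreover have "z \<noteq> comp y"
    using \<open>ldeg G z = 1\<close> assms(5) by auto
  ultimately have "var_of z \<noteq> var_of y"
    by (auto simp: var_of_eq_iff)
  with zx have "two_unique_occurrences G D z C x" "two_unique_occurrences G D z C y"
    using two_unique_occurrencesI[OF D] x y(1) \<open>D \<noteq> C\<close> by simp_all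
  with z(1) show ?thesis
    by (rule that)
qed

lemma shared_clause_case:
  assumes x: "unique_occurrence G C x" and y: "unique_occurrence G C y" "var_of x \<noteq> var_of y"
    and "2 \<le> ldeg G (comp x)" "2 \<le> ldeg G (comp y)"
    and t1: "maximal_singular_tuple (DP (var_of x) G) (u # s)"
    and t2: "maximal_singular_tuple (DP (var_of y) G) t2"
  shows "Suc (length s) = length t2"
proof -
  have "singular (DP (var_of x) G) u"
    using t1 by (simp add: maximal_singular_tuple_Cons)
  then obtain z D where u: "u = var_of z"
    and zx: "two_unique_occurrences G D z C x" and zy: "two_unique_occurrences G D z C y"
    using singular_DP_obtain_occurrence_outside[OF assms(1-5)] by metis
  obtain t where t: "maximal_singular_tuple (DP u G) (var_of x # t)"
      "maximal_singular_tuple (DP (var_of x) G) (u # t)"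
    using common_continuation[OF zx] unfolding u .
  obtain t' where t': "maximal_singular_tuple (DP u G) (var_of y # t')"
      "maximal_singular_tuple (DP (var_of y) G) (u # t')"
    using common_continuation[OF zy] unfolding u .
  have "singular G u"
    using unique_occurrence.singular[OF two_unique_occurrences.axioms(1)[OF zx]] u by simp
  have "length (u # s) = length (u # t)"
    using same_length_DP[OF unique_occurrence.singular[OF x] t1 t(2)] .
  also have "\<dots> = length (u # t')"
    using same_length_DP[OF \<open>singular G u\<close> t(1) t'(1)] by simp
  also have "\<dots> = length t2"
    using same_length_DP[OF unique_occurrence.singular[OF y(1)] t'(2) t2] .
  finally show ?thesis
    by simp
qed

lemma distinct_singular_heads:
  assumes v: "singular G v" and w: "singular G w" and "v \<noteq> w"
    and t1: "maximal_singular_tuple (DP v G) t1" and t2: "maximal_singular_tuple (DP w G) t2"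
  shows "length t1 = length t2"
proof (cases "\<exists>x C y D. var_of x = v \<and> var_of y = w \<and> two_unique_occurrences G C x D y")
  case True
  then obtain x C y D where xy: "v = var_of x" "w = var_of y" "two_unique_occurrences G C x D y"
    by blast
  obtain t where "maximal_singular_tuple (DP v G) (w # t)" "maximal_singular_tuple (DP w G) (v # t)"
    using common_continuation[OF xy(3)] unfolding xy(1,2) .
  with same_length_DP[OF v t1] same_length_DP[OF w t2] show ?thesis
    by simp
next
  case no_pair: False
  obtain x C where x: "var_of x = v" "unique_occurrence G C x"
    using singular_obtain_unique_occurrence[OF MU v] .
  obtain y D where y: "var_of y = w" "unique_occurrence G D y"
    using singular_obtain_unique_occurrence[OF MU w] .
  have "D = C"
  proof (rule ccontr)
    assume "D \<noteq> C"
    with x y \<open>v \<noteq> w\<close> have "two_unique_occurrences G C x D y"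
      by (intro two_unique_occurrencesI) auto
    with no_pair x(1) y(1) show False
      by blast
  qed
  have "\<not> unique_occurrence G E (comp x)" for E
  proof
    assume E: "unique_occurrence G E (comp x)"
    then have "E \<noteq> D"
      using unique_occurrence.x_in_C unique_occurrence.comp_notin_C[OF x(2)] \<open>D = C\<close> by blast
    with E y x(1) \<open>v \<noteq> w\<close> have "two_unique_occurrences G E (comp x) D y"
      by (intro two_unique_occurrencesI) auto
    with no_pair x(1) y(1) show False
      by (metis var_of_comp)
  qed
  then have cx: "2 \<le> ldeg G (comp x)"
    using unique_occurrence.two_le_ldeg_comp[OF x(2)] by blast
  have "\<not> unique_occurrence G E (comp y)" for E
  proof
    assume E: "unique_occurrence G E (comp y)"
    then have "E \<noteq> C"
      using unique_occurrence.x_in_C unique_occurrence.comp_notin_C[OF y(2)] \<open>D = C\<close> by blast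
    with E x y(1) \<open>v \<noteq> w\<close> have "two_unique_occurrences G C x E (comp y)"
      by (intro two_unique_occurrencesI) auto
    with no_pair x(1) y(1) show False
      by (metis var_of_comp)
  qed
  then have cy: "2 \<le> ldeg G (comp y)"
    using unique_occurrence.two_le_ldeg_comp[OF y(2)] by blast
  note x' = x(2) and y' = y(2)[unfolded \<open>D = C\<close>]
  show ?thesis
  proof (cases t1)
    case (Cons u s)
    with shared_clause_case[OF x' y' _ cx cy] t1 t2 x(1) y(1) \<open>v \<noteq> w\<close> show ?thesis
      by simp
  next
    case Nil
    with shared_clause_case[OF y' x' _ cy cx] t1 t2 x(1) y(1) \<open>v \<noteq> w\<close> show ?thesis
      by (cases t2) simp_all
  qed
qed
end

theorem maximal_singular_tuples_same_length:
  "G \<in> MU \<Longrightarrow> maximal_singular_tuple G a \<Longrightarrow> maximal_singular_tuple G b \<Longrightarrow> length a = length b"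
proof (induction "card G" arbitrary: G a b rule: less_induct)
  case less
  interpret same_length_below G
    by unfold_locales (fact less.prems(1), fact less.hyps)
  show ?case
  proof (cases a; cases b)
    assume "a = []" "b = []"
    then show ?thesis
      by simp
  next
    fix w t2
    assume "a = []" "b = w # t2"
    with less.prems(2,3) show ?thesis
      by (simp add: maximal_singular_tuple_Nil maximal_singular_tuple_Cons nonsingular_def)
  next
    fix v t1
    assume "a = v # t1" "b = []"
    with less.prems(2,3) show ?thesis
      by (simp add: maximal_singular_tuple_Nil maximal_singular_tuple_Cons nonsingular_def)
  next
    fix v t1 w t2
    assume "a = v # t1" "b = w # t2"
    with less.prems have v: "singular G v" "maximal_singular_tuple (DP v G) t1"
      and w: "singular G w" "maximal_singular_tuple (DP w G) t2"
      by (simp_all add: maximal_singular_tuple_Cons)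
    have "length t1 = length t2"
    proof (cases "v = w")
      case True
      with w(2) have "maximal_singular_tuple (DP v G) t2"
        by simp
      then show ?thesis
        by (rule same_length_DP[OF v])
    next
      case False
      show ?thesis
        by (rule distinct_singular_heads[OF v(1) w(1) False v(2) w(2)])
    qed
    with \<open>a = v # t1\<close> \<open>b = w # t2\<close> show ?thesis
      by simp
  qed
qed

theorem theorem63:
  fixes F :: "'v cls" and vs :: "'v list"
  assumes "F \<in> MU"
    and "maximal_singular_tuple F vs"
  shows "length vs = singind F"
proof -
  have "(LEAST n. \<exists>vs'. maximal_singular_tuple F vs' \<and> length vs' = n) = length vs"
  proof (rule Least_equality)
    show "\<exists>vs'. maximal_singular_tuple F vs' \<and> length vs' = length vs"
      using assms(2) by blast
  next
    fix n
    assume "\<exists>vs'. maximal_singular_tuple F vs' \<and> length vs' = n"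
    then obtain vs' where "maximal_singular_tuple F vs'" "length vs' = n"
      by blast
    then show "length vs \<le> n"
      using maximal_singular_tuples_same_length[OF assms] by simp
  qed
  then show ?thesis
    by (simp add: singind_def)
qed

end
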